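(* Let $n\ge 2$ and $t\ge 0$ be integers, and let $a_1,\dots,a_t$ be integers with $1<a_1<\cdots<a_t<n$ and $\gcd(a_j,2n)=1$ for $1\le j\le t$. Then for any edge $e$ of $C_{2n}(1,a_1,\dots,a_t)$, the graph $C_{2n}(1,a_1,\dots,a_t)-e$ obtained by deleting $e$ satisfies $\chi_{la}(C_{2n}(1,a_1,\dots,a_t)-e)=3$.
   Context: For an integer $m\ge 3$ and integers $s_1,\dots,s_k$, the circulant graph $C_m(s_1,\dots,s_k)$ is the simple graph with vertex set $\mathbb Z_m$ in which distinct vertices $u,v$ are adjacent if and only if $u-v\equiv \pm s_i\pmod m$ for some $i$. For a connected graph $G=(V,E)$ with $q=|E|$, a local antimagic labeling is a bijection $f:E\to\{1,\dots,q\}$ such that adjacent vertices $x,y$ satisfy $f^+(x)\ne f^+(y)$, where $f^+(x)=\sum f(e)$ over edges $e$ incident to $x$; $\chi_{la}(G)$ is the minimum number of distinct values of $f^+$ over all local antimagic labelings $f$ of $G$. *)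

theory Defs
  imports Main "HOL-Number_Theory.Cong"
begin

definition circulant_edges :: "nat \<Rightarrow> int list \<Rightarrow> nat set set" where
  "circulant_edges m S = {{u, v} | u v. u < m \<and> v < m \<and> u \<noteq> v \<and>
      (\<exists>s\<in>set S. [int u - int v = s] (mod int m) \<or> [int u - int v = - s] (mod int m))}"

definition vertex_sum :: "nat set set \<Rightarrow> (nat set \<Rightarrow> nat) \<Rightarrow> nat \<Rightarrow> nat" where
  "vertex_sum E f x = (\<Sum>e\<in>{e\<in>E. x \<in> e}. f e)"

definition local_antimagic :: "nat set set \<Rightarrow> (nat set \<Rightarrow> nat) \<Rightarrow> bool" where
  "local_antimagic E f \<longleftrightarrow> bij_betw f E {1..card E} \<and>
     (\<forall>x y. {x, y} \<in> E \<longrightarrow> x \<noteq> y \<longrightarrow> vertex_sum E f x \<noteq> vertex_sum E f y)"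

definition chi_la :: "nat set \<Rightarrow> nat set set \<Rightarrow> nat" where
  "chi_la V E = Inf {card (vertex_sum E f ` V) | f. local_antimagic E f}"

end

theory Submission
  imports Defs
begin

text \<open>
  All generators are odd, so \<open>C\<^sub>2\<^sub>n(S)\<close> is bipartite between even and odd vertices and
  summing the vertex sums over either class counts every label once. Two vertex sums therefore
  never suffice: they would have to alternate along the Hamiltonian path that the cycle
  \<open>0, 1, \<dots>, 2n - 1\<close> leaves after deleting \<open>e\<close>, so the two classes would carry different
  constant sums with equal totals.

  Three sums are reached by an explicit labelling. The \<open>2n\<close> edges of the \<open>j\<close>-th generator
  \<open>g\<^sub>j\<close>, oriented by a sign \<open>\<epsilon>\<^sub>j\<close>, get the labels \<open>2nj, \<dots>, 2nj + 2n - 1\<close>: the even vertex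
  with index \<open>h\<close> in class \<open>j\<close> meets one edge towards \<open>+\<epsilon>\<^sub>j g\<^sub>j\<close> labelled \<open>2nj + h\<close> and one
  towards \<open>-\<epsilon>\<^sub>j g\<^sub>j\<close> labelled \<open>2nj + 2n - 1 - h\<close>, so all even vertices get the same sum. The
  offsets of the classes are chosen such that at an odd vertex the index of the descending edge
  of class \<open>j\<close> equals that of the ascending edge of class \<open>j + 1\<close>; the sums telescope, and an
  odd vertex differs from the even sum by \<open>-t\<close> or \<open>n - t\<close>, where \<open>t = (\<Sum>\<^sub>j \<epsilon>\<^sub>j g\<^sub>j) mod n\<close>
  is nonzero for a suitable choice of signs. Finally \<open>e\<close> is made the edge with label \<open>0\<close>, whose
  deletion changes no vertex sum.
\<close>

section \<open>Arithmetic modulo \<open>2n\<close>\<close>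

lemma even_mod_even_iff:
  fixes a b :: int
  assumes "even b"
  shows "even (a mod b) \<longleftrightarrow> even a"
proof -
  have "a mod b mod 2 = a mod 2" using assms by (simp add: mod_mod_cancel)
  then show ?thesis by (simp add: even_iff_mod_2_eq_zero)
qed

lemma dvd_abs_less_imp_eq_0:
  fixes d m :: int
  assumes "m dvd d" "\<bar>d\<bar> < m"
  shows "d = 0"
proof (rule ccontr)
  assume "d \<noteq> 0"
  then have "\<bar>m\<bar> \<le> \<bar>d\<bar>" using dvd_imp_le_int assms(1) by blast
  then show False using assms(2) by linarith
qed

lemma signed_residue_unique:
  fixes a b n sa sb :: int
  assumes "0 < a" "a < n" "0 < b" "b < n" "sa = 1 \<or> sa = -1" "sb = 1 \<or> sb = -1"
    and "(sa * a) mod (2 * n) = (sb * b) mod (2 * n)"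
  shows "a = b \<and> sa = sb"
proof -
  have dvd: "2 * n dvd sa * a - sb * b"
    using assms(7) by (simp add: mod_eq_dvd_iff)
  have unit: "is_unit sa" using assms(5) by auto
  show ?thesis
  proof (cases "sa = sb")
    case True
    then have "sa * a - sb * b = sa * (a - b)" by (simp add: algebra_simps)
    then have "2 * n dvd a - b" using dvd unit by (simp add: dvd_mult_unit_iff')
    then have "a - b = 0"
      by (rule dvd_abs_less_imp_eq_0) (use assms in linarith)
    then show ?thesis using True by simp
  next
    case False
    then have "sa * a - sb * b = sa * (a + b)" using assms(5,6) by auto
    then have "2 * n dvd a + b" using dvd unit by (simp add: dvd_mult_unit_iff')
    then have "a + b = 0"
      by (rule dvd_abs_less_imp_eq_0) (use assms in linarith)
    then show ?thesis using assms by linarith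
  qed
qed

lemma double_mod_double_iff:
  fixes z :: int and h n :: nat
  assumes "even z" "h < n"
  shows "(2 * int h) mod (2 * int n) = z mod (2 * int n) \<longleftrightarrow> h = nat ((z mod (2 * int n)) div 2)"
proof -
  obtain k where k: "z mod (2 * int n) = 2 * k"
    using assms(1) by (auto simp: even_mod_even_iff elim: evenE)
  moreover have "0 \<le> z mod (2 * int n)" using assms(2) by simp
  moreover have "(2 * int h) mod (2 * int n) = 2 * int h" using assms(2) by simp
  ultimately show ?thesis by auto
qed

lemma half_diff_mod_shift:
  fixes z t n :: int
  assumes "0 \<le> z" "z < 2 * n" "even z" "0 < t" "t < n"
  shows "z div 2 - ((z + 2 * t) mod (2 * n)) div 2 = - t \<or>
    z div 2 - ((z + 2 * t) mod (2 * n)) div 2 = n - t"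
proof (cases "z + 2 * t < 2 * n")
  case True
  then have "(z + 2 * t) mod (2 * n) = z + 2 * t" using assms by (intro mod_pos_pos_trivial) auto
  then show ?thesis using assms(3) by (auto elim!: evenE)
next
  case False
  have "(z + 2 * t) mod (2 * n) = (z + 2 * t - 2 * n) mod (2 * n)"
    by (simp add: mod_diff_right_eq[symmetric])
  also have "\<dots> = z + 2 * t - 2 * n" using assms False by (intro mod_pos_pos_trivial) auto
  finally show ?thesis using assms(3) by (auto elim!: evenE)
qed

lemma mult_add_mod_unique:
  fixes N j1 j2 m1 m2 :: nat
  assumes "m1 < N" "m2 < N" "N * j1 + m1 = N * j2 + m2"
  shows "j1 = j2 \<and> m1 = m2"
proof -
  have "(N * j1 + m1) div N = (N * j2 + m2) div N" using assms(3) by simp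
  then have "j1 = j2" using assms(1,2) by simp
  then show ?thesis using assms(3) by simp
qed

lemma coprime_double_imp_odd: "coprime (s :: int) (2 * m) \<Longrightarrow> odd s"
  by (metis coprime_mult_right_iff coprime_right_2_iff_odd)

section \<open>Circulant graphs with odd generators\<close>

lemma circulant_edges_cong:
  assumes "set S = set S'"
  shows "circulant_edges m S = circulant_edges m S'"
  using assms by (simp add: circulant_edges_def)

lemma finite_circulant_edges: "finite (circulant_edges m S)"
proof (rule finite_subset)
  show "circulant_edges m S \<subseteq> Pow {..<m}" unfolding circulant_edges_def by auto
qed simp

lemma circulant_edgeE:
  assumes "E \<in> circulant_edges m S"
  obtains u v s where "E = {u, v}" "u < m" "v < m" "u \<noteq> v" "s \<in> set S"
    "[int u - int v = s] (mod int m) \<or> [int u - int v = - s] (mod int m)"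
  using assms unfolding circulant_edges_def by blast

lemma circulant_edge_Suc:
  assumes "1 \<in> set S" "v < m" "2 \<le> m"
  shows "{v, Suc v mod m} \<in> circulant_edges m S"
proof -
  have ne: "v \<noteq> Suc v mod m"
    using assms(2,3) by (cases "Suc v < m") (auto simp: le_mod_geq)
  have "[int v - int (Suc v mod m) = - 1] (mod int m)"
    by (simp add: cong_def of_nat_mod mod_diff_right_eq)
  then show ?thesis unfolding circulant_edges_def using assms ne
    by (intro CollectI exI[of _ v] exI[of _ "Suc v mod m"]) force
qed

lemma odd_diff_of_cong_odd:
  fixes d s :: int and n :: nat
  assumes "odd s" "[d = s] (mod 2 * int n) \<or> [d = - s] (mod 2 * int n)"
  shows "odd d"
proof -
  have "even (d mod (2 * int n)) = even d" "even ((- s) mod (2 * int n)) = even s"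
    "even (s mod (2 * int n)) = even s"
    by (simp_all add: even_mod_even_iff)
  then show ?thesis using assms by (auto simp: cong_def)
qed

lemma circulant_edge_parity:
  assumes "\<forall>s\<in>set S. odd s" "{x, y} \<in> circulant_edges (2 * n) S"
  shows "x < 2 * n \<and> y < 2 * n \<and> (even x \<longleftrightarrow> odd y)"
proof -
  obtain u v s where uv: "{x, y} = {u, v}" "u < 2 * n" "v < 2 * n" and s: "s \<in> set S"
    and c: "[int u - int v = s] (mod 2 * int n) \<or> [int u - int v = - s] (mod 2 * int n)"
    using assms(2) by (elim circulant_edgeE) auto
  have "odd (int u - int v)" using odd_diff_of_cong_odd[OF _ c] assms(1) s by blast
  then have "even u \<longleftrightarrow> odd v" by simp
  then show ?thesis using uv by (auto simp: doubleton_eq_iff)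
qed

lemma circulant_edge_orient:
  assumes "\<forall>s\<in>set S. odd s" "e \<in> circulant_edges (2 * n) S"
  obtains x y s \<sigma> where "e = {x, y}" "even x" "odd y" "x < 2 * n" "y < 2 * n"
    "s \<in> set S" "\<sigma> = 1 \<or> \<sigma> = -1" "[int y - int x = \<sigma> * s] (mod 2 * int n)"
proof -
  obtain u v s where e: "e = {u, v}" "u < 2 * n" "v < 2 * n" and s: "s \<in> set S"
    and c: "[int u - int v = s] (mod 2 * int n) \<or> [int u - int v = - s] (mod 2 * int n)"
    using assms(2) by (elim circulant_edgeE) auto
  have "odd (int u - int v)" using odd_diff_of_cong_odd[OF _ c] assms(1) s by blast
  then have par: "even u \<longleftrightarrow> odd v" by simp
  obtain \<sigma> :: int where \<sigma>: "\<sigma> = 1 \<or> \<sigma> = -1" "[int u - int v = \<sigma> * s] (mod 2 * int n)"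
    using c by (metis mult_1 mult_minus1)
  show ?thesis
  proof (cases "even u")
    case True
    have "[int v - int u = (- \<sigma>) * s] (mod 2 * int n)"
      using cong_minus_minus_iff \<sigma>(2) by fastforce
    then show ?thesis using that[of u v s "- \<sigma>"] True par e s \<sigma>(1) by auto
  next
    case False
    then show ?thesis using that[of v u s \<sigma>] par e s \<sigma> by (auto simp: insert_commute)
  qed
qed

lemma sum_vertex_sum_parity_class:
  assumes "\<forall>s\<in>set S. odd s" "E \<subseteq> circulant_edges (2 * n) S"
  shows "(\<Sum>v\<in>{v\<in>{0..<2 * n}. even v = b}. vertex_sum E f v) = (\<Sum>e\<in>E. f e)"
proof -
  have fin: "finite E" using assms(2) finite_circulant_edges by (rule finite_subset)
  have "(\<Sum>v\<in>{v\<in>{0..<2 * n}. even v = b}. vertex_sum E f v)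
      = (\<Sum>e\<in>E. \<Sum>v\<in>{v\<in>{v\<in>{0..<2 * n}. even v = b}. v \<in> e}. f e)"
    unfolding vertex_sum_def using fin by (intro sum.swap_restrict) auto
  also have "\<dots> = (\<Sum>e\<in>E. f e)"
  proof (rule sum.cong[OF refl])
    fix e assume "e \<in> E"
    then have e: "e \<in> circulant_edges (2 * n) S" using assms(2) by auto
    then obtain x y where xy: "e = {x, y}" by (elim circulant_edgeE) auto
    then have "x < 2 * n \<and> y < 2 * n \<and> (even x \<longleftrightarrow> odd y)"
      using circulant_edge_parity[OF assms(1)] e by blast
    then have "{v\<in>{v\<in>{0..<2 * n}. even v = b}. v \<in> e} = (if even x = b then {x} else {y})"
      using xy by auto
    then show "(\<Sum>v\<in>{v\<in>{v\<in>{0..<2 * n}. even v = b}. v \<in> e}. f e) = f e" by simp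
  qed
  finally show ?thesis .
qed

lemma card_even_below_double: "card {v\<in>{0..<2 * n}. even v} = n"
proof -
  have "{v\<in>{0..<2 * n}. even v} = (\<lambda>i. 2 * i) ` {..<n}" by (auto elim!: evenE)
  moreover have "inj_on (\<lambda>i::nat. 2 * i) {..<n}" by (auto simp: inj_on_def)
  ultimately show ?thesis by (simp add: card_image)
qed

lemma card_odd_below_double: "card {v\<in>{0..<2 * n}. odd v} = n"
proof -
  have "{v\<in>{0..<2 * n}. odd v} = (\<lambda>i. 2 * i + 1) ` {..<n}" by (auto elim!: oddE)
  moreover have "inj_on (\<lambda>i::nat. 2 * i + 1) {..<n}" by (auto simp: inj_on_def)
  ultimately show ?thesis by (simp add: card_image)
qed

section \<open>At least three vertex sums\<close>

lemma cycle_edge_avoiding: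
  assumes "3 \<le> N"
  obtains k where "k < N" "\<And>v. v < N \<Longrightarrow> v \<noteq> k \<Longrightarrow> {v, Suc v mod N} \<noteq> e"
proof (cases "\<exists>k<N. e = {k, Suc k mod N}")
  case True
  then obtain k where k: "k < N" "e = {k, Suc k mod N}" by blast
  have "{v, Suc v mod N} \<noteq> e" if v: "v < N" "v \<noteq> k" for v
  proof
    assume "{v, Suc v mod N} = e"
    then have "v = Suc k mod N" "Suc v mod N = k" using k(2) v(2) by (auto simp: doubleton_eq_iff)
    then have "Suc (Suc k) mod N = k" by (simp add: mod_Suc_eq)
    then show False using k(1) assms by (cases "Suc (Suc k) < N") (auto simp: le_mod_geq)
  qed
  then show ?thesis using that k(1) by blast
next
  case False
  then show ?thesis using that[of 0] assms by auto
qed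

lemma alternating_of_two_valued:
  fixes c :: "nat \<Rightarrow> 'a"
  assumes "finite C" "card C \<le> 2" "\<And>i. i < N \<Longrightarrow> c i \<in> C"
    and "\<And>i. Suc i < N \<Longrightarrow> c i \<noteq> c (Suc i)"
  shows "i < N \<Longrightarrow> c i = c (i mod 2)"
proof (induction i rule: less_induct)
  case (less i)
  show ?case
  proof (cases "i < 2")
    case False
    define j where "j = i - 2"
    have i: "i = Suc (Suc j)" using False by (simp add: j_def)
    have "c i = c j"
    proof (rule ccontr)
      assume "c i \<noteq> c j"
      moreover have "c j \<noteq> c (Suc j)" "c (Suc j) \<noteq> c i" using assms(4) less.prems i by auto
      ultimately have "card {c j, c (Suc j), c i} = 3" by auto
      moreover have "card {c j, c (Suc j), c i} \<le> card C"
        using assms(1,3) less.prems i by (intro card_mono) auto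
      ultimately show False using assms(2) by simp
    qed
    then show ?thesis using less.IH[of j] less.prems i by simp
  qed simp
qed

lemma two_valued_on_cycle_minus_edge:
  fixes F :: "nat \<Rightarrow> 'a"
  assumes "even N" "2 \<le> N" "k < N" "card (F ` {0..<N}) \<le> 2"
    and "\<And>v. v < N \<Longrightarrow> v \<noteq> k \<Longrightarrow> F v \<noteq> F (Suc v mod N)"
  shows "F 0 \<noteq> F 1" "\<And>v. v < N \<Longrightarrow> F v = F (v mod 2)"
proof -
  define p where "p i = (Suc k + i) mod N" for i
  have p_lt: "p i < N" for i using assms(2) by (simp add: p_def)
  have adj: "F (p i) \<noteq> F (p (Suc i))" if i: "Suc i < N" for i
  proof -
    have "p (Suc i) = Suc (p i) mod N" by (simp add: p_def mod_Suc_eq)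
    moreover have "p i \<noteq> k"
      using i assms(3) by (cases "Suc k + i < N") (auto simp: p_def le_mod_geq)
    ultimately show ?thesis using assms(5) p_lt by simp
  qed
  have alt: "F (p i) = F (p (i mod 2))" if "i < N" for i
  proof (rule alternating_of_two_valued[where C = "F ` {0..<N}"])
    show "\<And>i. i < N \<Longrightarrow> F (p i) \<in> F ` {0..<N}" using p_lt by simp
  qed (use assms(4) adj that in auto)
  have by_parity: "F v = F (p ((v + Suc k) mod 2))" if v: "v < N" for v
  proof -
    define i where "i = (v + N - Suc k) mod N"
    have "p i = (Suc k + (v + N - Suc k)) mod N" unfolding p_def i_def by (rule mod_add_right_eq)
    also have "\<dots> = v" using assms(3) v by simp
    finally have "p i = v" .
    moreover have "i mod 2 = (v + Suc k) mod 2"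
    proof -
      have "i mod 2 = (v + N - Suc k + 2 * Suc k) mod 2"
        using assms(1) by (simp add: i_def mod_mod_cancel)
      also have "v + N - Suc k + 2 * Suc k = (v + Suc k) + N" using assms(3) by simp
      finally show ?thesis using assms(1) by (auto elim: evenE)
    qed
    ultimately show ?thesis using alt[of i] assms(2) by (simp add: i_def)
  qed
  show "F v = F (v mod 2)" if "v < N" for v
  proof -
    have "v mod 2 < N" using assms(2) mod_less_divisor[of 2 v] by linarith
    have "F v = F (p ((v mod 2 + Suc k) mod 2))"
      using by_parity[OF that] by (simp only: mod_add_left_eq)
    also have "\<dots> = F (v mod 2)" by (rule by_parity[OF \<open>v mod 2 < N\<close>, symmetric])
    finally show ?thesis .
  qed
  show "F 0 \<noteq> F 1"
  proof (cases "even k")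
    case True
    then have "Suc k mod 2 = 1" "Suc (Suc k) mod 2 = 0" by (simp_all add: even_iff_mod_2_eq_zero mod_Suc)
    then have "F 0 = F (p 1)" "F 1 = F (p 0)" using by_parity[of 0] by_parity[of 1] assms(2) by simp_all
    then show ?thesis using adj[of 0] assms(2) by simp
  next
    case False
    then have "Suc k mod 2 = 0" "Suc (Suc k) mod 2 = 1" by (simp_all add: odd_iff_mod_2_eq_one mod_Suc)
    then have "F 0 = F (p 0)" "F 1 = F (p 1)" using by_parity[of 0] by_parity[of 1] assms(2) by simp_all
    then show ?thesis using adj[of 0] assms(2) by simp
  qed
qed

lemma three_le_card_vertex_sums_circulant_minus_edge:
  assumes "2 \<le> n" "\<forall>s\<in>set S. odd s" "1 \<in> set S"
    and "local_antimagic (circulant_edges (2 * n) S - {e}) f"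
  shows "3 \<le> card (vertex_sum (circulant_edges (2 * n) S - {e}) f ` {0..<2 * n})"
proof (rule ccontr)
  define N where "N = 2 * n"
  define F where "F = vertex_sum (circulant_edges N S - {e}) f"
  assume "\<not> ?thesis"
  then have two: "card (F ` {0..<N}) \<le> 2" by (simp add: F_def N_def)
  have N: "4 \<le> N" "even N" using assms(1) by (auto simp: N_def)
  have "3 \<le> N" using N(1) by linarith
  then obtain k where k: "k < N" "\<And>v. v < N \<Longrightarrow> v \<noteq> k \<Longrightarrow> {v, Suc v mod N} \<noteq> e"
    using cycle_edge_avoiding[of N e] by blast
  have adj: "F v \<noteq> F (Suc v mod N)" if "v < N" "v \<noteq> k" for v
  proof -
    have "{v, Suc v mod N} \<in> circulant_edges N S - {e}"
      using circulant_edge_Suc[OF assms(3) that(1)] N(1) k(2)[OF that] by simp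
    moreover have "v \<noteq> Suc v mod N"
      using that(1) N(1) by (cases "Suc v < N") (auto simp: le_mod_geq)
    ultimately show ?thesis using assms(4) by (simp add: local_antimagic_def F_def N_def)
  qed
  have "2 \<le> N" using N(1) by linarith
  then have parity: "F 0 \<noteq> F 1" "\<And>v. v < N \<Longrightarrow> F v = F (v mod 2)"
    using two_valued_on_cycle_minus_edge[of N k F] N(2) k(1) two adj by blast+
  have even_val: "F v = F 0" if "v < N" "even v" for v
    using parity(2)[OF that(1)] that(2) by (simp add: even_iff_mod_2_eq_zero)
  have odd_val: "F v = F 1" if "v < N" "odd v" for v
    using parity(2)[OF that(1)] that(2) by (simp add: odd_iff_mod_2_eq_one)
  have class_sum: "(\<Sum>v\<in>{v\<in>{0..<2 * n}. even v = b}. F v) = (\<Sum>e'\<in>circulant_edges N S - {e}. f e')"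
    for b unfolding F_def N_def by (rule sum_vertex_sum_parity_class[OF assms(2) Diff_subset])
  have "n * F 0 = (\<Sum>v\<in>{v\<in>{0..<2 * n}. even v}. F 0)"
    using card_even_below_double[of n] by simp
  also have "\<dots> = (\<Sum>v\<in>{v\<in>{0..<2 * n}. even v = True}. F v)"
    by (rule sum.cong) (auto intro: even_val[symmetric] simp: N_def)
  also have "\<dots> = (\<Sum>v\<in>{v\<in>{0..<2 * n}. even v = False}. F v)"
    by (simp only: class_sum)
  also have "\<dots> = (\<Sum>v\<in>{v\<in>{0..<2 * n}. odd v}. F 1)"
    by (rule sum.cong) (auto intro: odd_val[unfolded One_nat_def] simp: N_def)
  also have "\<dots> = n * F 1"
    using card_odd_below_double[of n] by simp
  finally show False using parity(1) assms(1) by simp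
qed

section \<open>A labelling with three vertex sums\<close>

locale circulant_labelling =
  fixes n :: nat and G :: "int list" and \<epsilon> :: "nat \<Rightarrow> int" and w :: int
  assumes G_nonempty: "G \<noteq> []"
    and G_distinct: "distinct G"
    and G_range: "\<And>s. s \<in> set G \<Longrightarrow> 0 < s \<and> s < int n \<and> odd s"
    and sign: "\<And>i. \<epsilon> i = 1 \<or> \<epsilon> i = -1"
    and signed_sum_not_dvd: "\<not> int n dvd (\<Sum>i<length G. \<epsilon> i * G ! i)"
    and odd_w: "odd w"
begin

abbreviation r :: nat where "r \<equiv> length G"

definition N :: int where "N = 2 * int n"

definition step :: "nat \<Rightarrow> int" where "step j = \<epsilon> j * G ! j"

definition offset :: "nat \<Rightarrow> int" where "offset j = w - 2 * (\<Sum>i<j. step i)"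

definition even_end :: "nat \<Rightarrow> nat \<Rightarrow> int" where
  "even_end j h = (offset j - step j + 2 * int h) mod N"

definition odd_end :: "nat \<Rightarrow> nat \<Rightarrow> bool \<Rightarrow> int" where
  "odd_end j h k = (even_end j h + (if k then step j else - step j)) mod N"

definition edge :: "nat \<times> nat \<times> bool \<Rightarrow> nat set" where
  "edge = (\<lambda>(j, h, k). {nat (even_end j h), nat (odd_end j h k)})"

definition label :: "nat \<times> nat \<times> bool \<Rightarrow> nat" where
  "label = (\<lambda>(j, h, k). 2 * n * j + (if k then h else 2 * n - 1 - h))"

definition indices :: "(nat \<times> nat \<times> bool) set" where
  "indices = {..<r} \<times> {..<n} \<times> UNIV"

lemma n_ge_2: "2 \<le> n"
proof -
  obtain s where "s \<in> set G" using G_nonempty by fastforce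
  then show ?thesis using G_range by fastforce
qed

lemma N_pos: "0 < N" and N_even: "even N"
  using n_ge_2 by (auto simp: N_def)

lemma nth_G: "j < r \<Longrightarrow> 0 < G ! j \<and> G ! j < int n \<and> odd (G ! j)"
  using G_range nth_mem by blast

lemma odd_step: "j < r \<Longrightarrow> odd (step j)"
  using nth_G[of j] sign[of j] by (auto simp: step_def)

lemma odd_offset: "odd (offset j)"
  using odd_w by (simp add: offset_def)

lemma offset_Suc: "offset (Suc j) = offset j - 2 * step j"
  by (simp add: offset_def algebra_simps)

lemma even_end_range: "j < r \<Longrightarrow> even (even_end j h) \<and> 0 \<le> even_end j h \<and> even_end j h < N"
  using odd_step[of j] odd_offset[of j] N_pos N_even
  by (simp add: even_end_def even_mod_even_iff)

lemma odd_end_range: "j < r \<Longrightarrow> odd (odd_end j h k) \<and> 0 \<le> odd_end j h k \<and> odd_end j h k < N"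
  using odd_step[of j] even_end_range[of j h] N_pos N_even
  by (simp add: odd_end_def even_mod_even_iff)

lemma odd_end_diff: "(odd_end j h k - even_end j h) mod N = ((if k then 1 else -1) * step j) mod N"
  by (cases k) (simp_all add: odd_end_def mod_diff_left_eq)

lemma odd_end_True: "odd_end j h True = (offset j + 2 * int h) mod N"
  by (simp add: odd_end_def even_end_def mod_add_left_eq)

lemma odd_end_False: "odd_end j h False = (offset (Suc j) + 2 * int h) mod N"
proof -
  have "odd_end j h False = (offset j - step j + 2 * int h - step j) mod N"
    by (simp add: odd_end_def even_end_def mod_diff_left_eq)
  also have "offset j - step j + 2 * int h - step j = offset (Suc j) + 2 * int h"
    by (simp add: offset_Suc)
  finally show ?thesis .
qed

abbreviation edges :: "nat set set" where "edges \<equiv> circulant_edges (2 * n) G"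

lemma mem_edges:
  assumes "u < 2 * n" "v < 2 * n" "u \<noteq> v" "j < r"
    and "(int u - int v) mod N = (\<sigma> * G ! j) mod N" "\<sigma> = 1 \<or> \<sigma> = -1"
  shows "{u, v} \<in> edges"
proof -
  have "[int u - int v = G ! j] (mod int (2 * n)) \<or> [int u - int v = - G ! j] (mod int (2 * n))"
    using assms(5,6) by (auto simp: cong_def N_def)
  then show ?thesis
    unfolding circulant_edges_def using assms(1-4) nth_mem by blast
qed

lemma edge_in_edges:
  assumes "i \<in> indices"
  shows "edge i \<in> edges"
proof -
  obtain j h k where i: "i = (j, h, k)" by (cases i) auto
  have j: "j < r" using assms i by (auto simp: indices_def)
  have x: "even (even_end j h)" "0 \<le> even_end j h" "even_end j h < N"
    using even_end_range[OF j] by auto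
  have y: "odd (odd_end j h k)" "0 \<le> odd_end j h k" "odd_end j h k < N"
    using odd_end_range[OF j] by auto
  have "(odd_end j h k - even_end j h) mod N = ((if k then 1 else -1) * \<epsilon> j * G ! j) mod N"
    using odd_end_diff by (simp add: step_def)
  then have "(int (nat (odd_end j h k)) - int (nat (even_end j h))) mod N
      = ((if k then 1 else -1) * \<epsilon> j * G ! j) mod N"
    using x y by simp
  moreover have "(if k then 1 else -1) * \<epsilon> j = 1 \<or> (if k then 1 else -1) * \<epsilon> j = -1"
    using sign[of j] by auto
  moreover have "nat (odd_end j h k) \<noteq> nat (even_end j h)" using x y by (metis nat_eq_iff2)
  moreover have "nat (odd_end j h k) < 2 * n" "nat (even_end j h) < 2 * n"
    using x y by (auto simp: N_def)
  ultimately have "{nat (odd_end j h k), nat (even_end j h)} \<in> edges"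
    using mem_edges[OF _ _ _ j] by (metis mult.assoc)
  then show ?thesis by (simp add: edge_def i insert_commute)
qed

lemma edge_eq_imp_ends_eq:
  assumes "j1 < r" "j2 < r" "edge (j1, h1, k1) = edge (j2, h2, k2)"
  shows "even_end j1 h1 = even_end j2 h2 \<and> odd_end j1 h1 k1 = odd_end j2 h2 k2"
proof -
  have x: "even (even_end j1 h1)" "0 \<le> even_end j1 h1" "even (even_end j2 h2)" "0 \<le> even_end j2 h2"
    using even_end_range assms(1,2) by auto
  have y: "odd (odd_end j1 h1 k1)" "0 \<le> odd_end j1 h1 k1" "odd (odd_end j2 h2 k2)" "0 \<le> odd_end j2 h2 k2"
    using odd_end_range assms(1,2) by auto
  have "{nat (even_end j1 h1), nat (odd_end j1 h1 k1)} = {nat (even_end j2 h2), nat (odd_end j2 h2 k2)}"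
    using assms(3) by (simp add: edge_def)
  moreover have "even (nat (even_end j1 h1))" "even (nat (even_end j2 h2))"
    "odd (nat (odd_end j1 h1 k1))" "odd (nat (odd_end j2 h2 k2))"
    using x y by (auto simp: even_nat_iff)
  ultimately have "nat (even_end j1 h1) = nat (even_end j2 h2)"
    "nat (odd_end j1 h1 k1) = nat (odd_end j2 h2 k2)"
    by (auto simp: doubleton_eq_iff)
  then show ?thesis using x y by auto
qed

lemma inj_on_edge: "inj_on edge indices"
proof (rule inj_onI)
  fix i1 i2 assume "i1 \<in> indices" "i2 \<in> indices" and eq: "edge i1 = edge i2"
  then obtain j1 h1 k1 j2 h2 k2 where i: "i1 = (j1, h1, k1)" "i2 = (j2, h2, k2)"
    and j: "j1 < r" "j2 < r" and h: "h1 < n" "h2 < n"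
    by (auto simp: indices_def)
  have x_eq: "even_end j1 h1 = even_end j2 h2" and y_eq: "odd_end j1 h1 k1 = odd_end j2 h2 k2"
    using edge_eq_imp_ends_eq[OF j] eq i by auto
  define \<sigma>1 where "\<sigma>1 = (if k1 then 1 else -1) * \<epsilon> j1"
  define \<sigma>2 where "\<sigma>2 = (if k2 then 1 else -1) * \<epsilon> j2"
  have "(\<sigma>1 * G ! j1) mod (2 * int n) = (\<sigma>2 * G ! j2) mod (2 * int n)"
    using odd_end_diff[of j1 h1 k1] odd_end_diff[of j2 h2 k2] x_eq y_eq
    by (simp add: \<sigma>1_def \<sigma>2_def step_def N_def mult.assoc)
  moreover have "\<sigma>1 = 1 \<or> \<sigma>1 = -1" "\<sigma>2 = 1 \<or> \<sigma>2 = -1"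
    using sign[of j1] sign[of j2] by (auto simp: \<sigma>1_def \<sigma>2_def)
  ultimately have "G ! j1 = G ! j2 \<and> \<sigma>1 = \<sigma>2"
    using signed_residue_unique nth_G[OF j(1)] nth_G[OF j(2)] by blast
  then have jj: "j1 = j2" and kk: "k1 = k2"
    using G_distinct j sign[of j2] by (auto simp: nth_eq_iff_index_eq \<sigma>1_def \<sigma>2_def split: if_splits)
  have "N dvd 2 * int h1 - 2 * int h2"
    using x_eq jj by (simp add: even_end_def mod_eq_dvd_iff)
  then have "(2 * int h1) mod N = (2 * int h2) mod N" by (simp add: mod_eq_dvd_iff)
  then have "h1 = h2" using h by (simp add: N_def)
  then show "i1 = i2" using i jj kk by simp
qed

lemma odd_generators: "\<forall>s\<in>set G. odd s"
  using G_range by blast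

definition even_pos :: "nat \<Rightarrow> nat \<Rightarrow> nat" where
  "even_pos j x = nat (((int x - (offset j - step j)) mod N) div 2)"

definition odd_pos :: "nat \<Rightarrow> nat \<Rightarrow> nat" where
  "odd_pos j x = nat (((int x - offset j) mod N) div 2)"

lemma half_mod_N_less: "nat ((z mod N) div 2) < n"
proof -
  have "z mod N < 2 * int n" "0 \<le> z mod N" using N_pos by (auto simp: N_def)
  then show ?thesis by linarith
qed

lemma even_pos_less: "even_pos j x < n" and odd_pos_less: "odd_pos j x < n"
  unfolding even_pos_def odd_pos_def by (rule half_mod_N_less)+

lemma eq_mod_N_iff:
  fixes a :: int and x h :: nat
  assumes "x < 2 * n" "h < n" "even (int x - a)"
  shows "int x = (a + 2 * int h) mod N \<longleftrightarrow> h = nat (((int x - a) mod N) div 2)"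
proof -
  have "int x = (a + 2 * int h) mod N \<longleftrightarrow> int x mod N = (a + 2 * int h) mod N"
    using assms(1) by (simp add: N_def)
  also have "\<dots> \<longleftrightarrow> N dvd - (2 * int h - (int x - a))"
    by (simp add: mod_eq_dvd_iff algebra_simps)
  also have "\<dots> \<longleftrightarrow> (2 * int h) mod N = (int x - a) mod N"
    by (simp only: dvd_minus_iff mod_eq_dvd_iff)
  also have "\<dots> \<longleftrightarrow> h = nat (((int x - a) mod N) div 2)"
    unfolding N_def by (rule double_mod_double_iff[OF assms(3,2)])
  finally show ?thesis .
qed

lemma mem_edge_iff:
  assumes "j < r" "h < n" "x < 2 * n"
  shows "x \<in> edge (j, h, k) \<longleftrightarrow>
    h = (if even x then even_pos j x else if k then odd_pos j x else odd_pos (Suc j) x)"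
proof -
  have X: "even (even_end j h)" "0 \<le> even_end j h" and Y: "odd (odd_end j h k)" "0 \<le> odd_end j h k"
    using even_end_range[OF assms(1)] odd_end_range[OF assms(1)] by auto
  have "x \<in> edge (j, h, k) \<longleftrightarrow> int x = even_end j h \<or> int x = odd_end j h k"
    using X Y by (auto simp: edge_def)
  also have "\<dots> \<longleftrightarrow> (if even x then int x = even_end j h else int x = odd_end j h k)"
  proof -
    have "even x \<Longrightarrow> int x \<noteq> odd_end j h k" "odd x \<Longrightarrow> int x \<noteq> even_end j h"
      using X(1) Y(1) by (metis even_of_nat)+
    then show ?thesis by auto
  qed
  also have "\<dots> \<longleftrightarrow>
      h = (if even x then even_pos j x else if k then odd_pos j x else odd_pos (Suc j) x)"
    using eq_mod_N_iff[OF assms(3,2)] odd_step[OF assms(1)] odd_offset[of j] odd_offset[of "Suc j"]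
    by (cases k) (auto simp: even_end_def even_pos_def odd_pos_def odd_end_True odd_end_False)
  finally show ?thesis .
qed

lemma edges_subset_image_edge: "edges \<subseteq> edge ` indices"
proof
  fix e assume "e \<in> edges"
  then obtain x y s \<sigma> where e: "e = {x, y}" "even x" "odd y" "x < 2 * n" "y < 2 * n"
    and s: "s \<in> set G" and \<sigma>: "\<sigma> = 1 \<or> \<sigma> = -1" "[int y - int x = \<sigma> * s] (mod 2 * int n)"
    by (rule circulant_edge_orient[OF odd_generators])
  obtain j where j: "j < r" "G ! j = s" using s by (auto simp: in_set_conv_nth)
  define h where "h = even_pos j x"
  define k where "k = (\<sigma> * \<epsilon> j = 1)"
  have h: "h < n" by (simp add: h_def even_pos_less)
  have x: "even_end j h = int x"
    using eq_mod_N_iff[OF e(4) h, of "offset j - step j"] odd_step[OF j(1)] odd_offset[of j] e(2)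
    by (simp add: even_end_def even_pos_def h_def)
  have "(if k then step j else - step j) = \<sigma> * s"
    using sign[of j] \<sigma>(1) j(2) by (auto simp: k_def step_def)
  then have "odd_end j h k = (int x + \<sigma> * s) mod N" by (simp add: odd_end_def x)
  also have "\<dots> = (int x + (int y - int x)) mod N"
    using \<sigma>(2) by (intro mod_add_cong) (simp_all add: cong_def N_def)
  also have "\<dots> = int y" using e(5) by (simp add: N_def)
  finally have "edge (j, h, k) = e" using x e(1) by (simp add: edge_def)
  moreover have "(j, h, k) \<in> indices" using j h by (simp add: indices_def)
  ultimately show "e \<in> edge ` indices" by blast
qed

lemma bij_betw_edge: "bij_betw edge indices edges"
  using inj_on_edge edge_in_edges edges_subset_image_edge by (auto simp: bij_betw_def)

lemma bij_betw_label: "bij_betw label indices {..<2 * n * r}"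
proof -
  have inj: "inj_on label indices"
  proof (rule inj_onI)
    fix i1 i2 assume "i1 \<in> indices" "i2 \<in> indices" and eq: "label i1 = label i2"
    then obtain j1 h1 k1 j2 h2 k2 where i: "i1 = (j1, h1, k1)" "i2 = (j2, h2, k2)"
      and h: "h1 < n" "h2 < n"
      by (auto simp: indices_def)
    define m1 where "m1 = (if k1 then h1 else 2 * n - 1 - h1)"
    define m2 where "m2 = (if k2 then h2 else 2 * n - 1 - h2)"
    have "m1 < 2 * n" "m2 < 2 * n" using h by (auto simp: m1_def m2_def)
    moreover have "2 * n * j1 + m1 = 2 * n * j2 + m2"
      using eq by (simp add: label_def i m1_def m2_def)
    ultimately have "j1 = j2" "m1 = m2" using mult_add_mod_unique by blast+
    moreover have "k1 = k2 \<and> h1 = h2"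
      using \<open>m1 = m2\<close> h by (auto simp: m1_def m2_def split: if_splits)
    ultimately show "i1 = i2" using i by simp
  qed
  moreover have "label ` indices \<subseteq> {..<2 * n * r}"
  proof
    fix l assume "l \<in> label ` indices"
    then obtain j h k where j: "j < r" and h: "h < n"
      and l: "l = 2 * n * j + (if k then h else 2 * n - 1 - h)"
      by (auto simp: indices_def label_def)
    have "(if k then h else 2 * n - 1 - h) < 2 * n" using h by auto
    moreover have "2 * n * Suc j \<le> 2 * n * r" using j by (intro mult_le_mono2) simp
    ultimately show "l \<in> {..<2 * n * r}" using l by simp
  qed
  moreover have "card (label ` indices) = 2 * n * r"
    using inj by (simp add: card_image indices_def card_cartesian_product)
  ultimately have "label ` indices = {..<2 * n * r}"
    by (intro card_subset_eq) auto
  with inj show ?thesis by (simp add: bij_betw_def)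
qed

definition edge_label :: "nat set \<Rightarrow> nat" where
  "edge_label e = label (the_inv_into indices edge e)"

definition removed_edge :: "nat set" where
  "removed_edge = edge (0, 0, True)"

lemma edge_label_edge: "i \<in> indices \<Longrightarrow> edge_label (edge i) = label i"
  using inj_on_edge by (simp add: edge_label_def the_inv_into_f_f)

lemma removed_edge_index_mem: "(0, 0, True) \<in> indices"
  using G_nonempty n_ge_2 by (simp add: indices_def)

lemma removed_edge_in_edges: "removed_edge \<in> edges"
  using edge_in_edges[OF removed_edge_index_mem] by (simp add: removed_edge_def)

lemma edge_label_removed_edge: "edge_label removed_edge = 0"
  using edge_label_edge[OF removed_edge_index_mem] by (simp add: removed_edge_def label_def)

lemma bij_betw_edge_label: "bij_betw edge_label edges {..<2 * n * r}"
proof -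
  have "bij_betw (label \<circ> the_inv_into indices edge) edges {..<2 * n * r}"
    using bij_betw_the_inv_into[OF bij_betw_edge] bij_betw_label by (rule bij_betw_trans)
  moreover have "edge_label = label \<circ> the_inv_into indices edge" by (simp add: fun_eq_iff edge_label_def)
  ultimately show ?thesis by simp
qed

lemma bij_betw_edge_label_remove:
  "bij_betw edge_label (edges - {removed_edge}) {1..card (edges - {removed_edge})}"
proof -
  have inj: "inj_on edge_label edges" using bij_betw_edge_label by (simp add: bij_betw_def)
  have card: "card edges = 2 * n * r" using bij_betw_edge_label by (simp add: bij_betw_same_card)
  have "edge_label ` (edges - {removed_edge}) = edge_label ` edges - edge_label ` {removed_edge}"
    using inj removed_edge_in_edges by (intro inj_on_image_set_diff) auto
  also have "\<dots> = {..<2 * n * r} - {0}"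
    using bij_betw_edge_label edge_label_removed_edge by (simp add: bij_betw_def)
  also have "\<dots> = {1..card (edges - {removed_edge})}"
    using card removed_edge_in_edges finite_circulant_edges by auto
  finally show ?thesis using inj by (simp add: bij_betw_def inj_on_diff)
qed

lemma sum_indices: "(\<Sum>i\<in>indices. F i) = (\<Sum>j<r. \<Sum>h<n. \<Sum>k\<in>UNIV. F (j, h, k))"
proof -
  have "(\<Sum>i\<in>indices. F i) = (\<Sum>j<r. \<Sum>p\<in>{..<n} \<times> UNIV. F (j, p))"
    unfolding indices_def by (simp add: sum.cartesian_product)
  also have "\<dots> = (\<Sum>j<r. \<Sum>h<n. \<Sum>k\<in>UNIV. F (j, h, k))"
    by (simp add: sum.cartesian_product)
  finally show ?thesis .
qed

lemma class_vertex_sum: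
  assumes "j < r" "x < 2 * n"
  shows "int (\<Sum>h<n. \<Sum>k\<in>UNIV. if x \<in> edge (j, h, k) then label (j, h, k) else 0) =
    int (4 * n * j + 2 * n - 1) + (if even x then 0 else int (odd_pos j x) - int (odd_pos (Suc j) x))"
proof -
  define p where
    "p k = (if even x then even_pos j x else if k then odd_pos j x else odd_pos (Suc j) x)" for k
  have p: "p k < n" for k by (simp add: p_def even_pos_less odd_pos_less)
  have "(\<Sum>h<n. \<Sum>k\<in>UNIV. if x \<in> edge (j, h, k) then label (j, h, k) else 0)
      = (\<Sum>h<n. (if h = p False then 2 * n * j + (2 * n - 1 - h) else 0)
          + (if h = p True then 2 * n * j + h else 0))"
    using assms by (intro sum.cong refl) (simp add: UNIV_bool mem_edge_iff p_def label_def)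
  also have "\<dots> = 2 * n * j + (2 * n - 1 - p False) + (2 * n * j + p True)"
    using p by (simp add: sum.distrib)
  finally show ?thesis using p[of False] by (auto simp: p_def)
qed

definition even_sum :: nat where
  "even_sum = (\<Sum>j<r. 4 * n * j + 2 * n - 1)"

lemma vertex_sum_edge_label:
  assumes "x < 2 * n"
  shows "int (vertex_sum (edges - {removed_edge}) edge_label x) =
    int even_sum + (if even x then 0 else int (odd_pos 0 x) - int (odd_pos r x))"
proof -
  have "vertex_sum (edges - {removed_edge}) edge_label x = (\<Sum>e\<in>edges. if x \<in> e then edge_label e else 0)"
    unfolding vertex_sum_def sum.inter_filter[OF finite_circulant_edges, symmetric]
    using finite_circulant_edges edge_label_removed_edge by (intro sum.mono_neutral_left) auto
  also have "\<dots> = (\<Sum>i\<in>indices. if x \<in> edge i then edge_label (edge i) else 0)"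
    by (rule sum.reindex_bij_betw[OF bij_betw_edge, of "\<lambda>e. if x \<in> e then edge_label e else 0", symmetric])
  also have "\<dots> = (\<Sum>i\<in>indices. if x \<in> edge i then label i else 0)"
    by (rule sum.cong) (simp_all add: edge_label_edge)
  finally have "int (vertex_sum (edges - {removed_edge}) edge_label x) =
      (\<Sum>j<r. int (\<Sum>h<n. \<Sum>k\<in>UNIV. if x \<in> edge (j, h, k) then label (j, h, k) else 0))"
    by (simp add: sum_indices)
  also have "\<dots> = (\<Sum>j<r. int (4 * n * j + 2 * n - 1)
      + (if even x then 0 else int (odd_pos j x) - int (odd_pos (Suc j) x)))"
    using class_vertex_sum assms by simp
  also have "\<dots> = int even_sum + (if even x then 0 else int (odd_pos 0 x) - int (odd_pos r x))"
    using sum_lessThan_telescope'[of "\<lambda>j. int (odd_pos j x)" r]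
    by (simp add: sum.distrib even_sum_def)
  finally show ?thesis .
qed

definition shift :: int where
  "shift = (\<Sum>j<r. step j) mod int n"

lemma shift_range: "0 < shift \<and> shift < int n"
proof -
  have "(\<Sum>j<r. step j) mod int n \<noteq> 0"
    using signed_sum_not_dvd by (simp add: step_def mod_eq_0_iff_dvd)
  moreover have "0 \<le> (\<Sum>j<r. step j) mod int n" "(\<Sum>j<r. step j) mod int n < int n"
    using n_ge_2 by auto
  ultimately show ?thesis by (simp add: shift_def)
qed

lemma offset_0: "offset 0 = w"
  by (simp add: offset_def)

lemma int_odd_pos: "int (odd_pos j x) = ((int x - offset j) mod N) div 2"
  using N_pos by (simp add: odd_pos_def)

lemma offset_length: "(int x - offset r) mod N = ((int x - w) mod N + 2 * shift) mod N"
proof -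
  have "(int x - offset r) mod N = ((int x - w) + 2 * (\<Sum>j<r. step j)) mod N"
    by (simp add: offset_def algebra_simps)
  also have "\<dots> = ((int x - w) mod N + (2 * (\<Sum>j<r. step j)) mod N) mod N"
    by (simp add: mod_add_eq)
  also have "(2 * (\<Sum>j<r. step j)) mod N = 2 * shift"
    unfolding N_def shift_def by (rule mult_mod_right[symmetric])
  finally show ?thesis .
qed

lemma odd_pos_diff:
  "int (odd_pos 0 x) - int (odd_pos r x) = - shift \<or> int (odd_pos 0 x) - int (odd_pos r x) = int n - shift"
  if "odd x"
proof -
  define z where "z = (int x - w) mod N"
  have z: "0 \<le> z" "z < 2 * int n" "even z"
    using N_pos N_even that odd_w by (auto simp: z_def N_def even_mod_even_iff)
  have "int (odd_pos 0 x) = z div 2" by (simp add: int_odd_pos offset_0 z_def)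
  moreover have "int (odd_pos r x) = ((z + 2 * shift) mod N) div 2"
    by (simp add: int_odd_pos offset_length z_def)
  ultimately show ?thesis using half_diff_mod_shift[OF z] shift_range by (simp add: N_def)
qed

lemma odd_pos_diff_minus_shift: "\<exists>x<2 * n. odd x \<and> int (odd_pos 0 x) - int (odd_pos r x) = - shift"
proof -
  define x where "x = nat (w mod N)"
  have x: "int x = w mod N" using N_pos by (simp add: x_def)
  then have "int x < 2 * int n" "odd (int x)"
    using N_pos N_even odd_w by (simp_all add: N_def even_mod_even_iff)
  moreover have "(int x - w) mod N = 0" using x by (simp add: mod_diff_left_eq)
  then have "int (odd_pos 0 x) = 0" "int (odd_pos r x) = ((2 * shift) mod N) div 2"
    by (simp_all add: int_odd_pos offset_0 offset_length)
  moreover have "(2 * shift) mod N = 2 * shift" using shift_range by (simp add: N_def)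
  ultimately show ?thesis by (intro exI[of _ x]) auto
qed

lemma odd_pos_diff_n_minus_shift:
  "\<exists>x<2 * n. odd x \<and> int (odd_pos 0 x) - int (odd_pos r x) = int n - shift"
proof -
  define x where "x = nat ((w - 2 * shift) mod N)"
  have x: "int x = (w - 2 * shift) mod N" using N_pos by (simp add: x_def)
  then have "int x < 2 * int n" "odd (int x)"
    using N_pos N_even odd_w by (simp_all add: N_def even_mod_even_iff)
  moreover have z: "(int x - w) mod N = N - 2 * shift"
  proof -
    have "(int x - w) mod N = (N - 2 * shift) mod N"
      using x by (simp add: mod_diff_left_eq mod_eq_dvd_iff)
    also have "\<dots> = N - 2 * shift"
      using shift_range by (intro mod_pos_pos_trivial) (auto simp: N_def)
    finally show ?thesis .
  qed
  then have "int (odd_pos 0 x) = (N - 2 * shift) div 2" "int (odd_pos r x) = 0"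
    by (simp_all add: int_odd_pos offset_0 offset_length)
  moreover have "(N - 2 * shift) div 2 = int n - shift" by (simp add: N_def)
  ultimately show ?thesis by (intro exI[of _ x]) auto
qed

lemma vertex_sum_even:
  "x < 2 * n \<Longrightarrow> even x \<Longrightarrow> vertex_sum (edges - {removed_edge}) edge_label x = even_sum"
  using vertex_sum_edge_label[of x] by simp

lemma vertex_sum_odd:
  assumes "x < 2 * n" "odd x"
  shows "int (vertex_sum (edges - {removed_edge}) edge_label x) = int even_sum - shift \<or>
    int (vertex_sum (edges - {removed_edge}) edge_label x) = int even_sum + int n - shift"
  using vertex_sum_edge_label[OF assms(1)] odd_pos_diff[OF assms(2)] assms(2) by auto

theorem local_antimagic_edge_label: "local_antimagic (edges - {removed_edge}) edge_label"
  unfolding local_antimagic_def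
proof (intro conjI allI impI)
  fix x y assume "{x, y} \<in> edges - {removed_edge}"
  then have "x < 2 * n" "y < 2 * n" "even x \<longleftrightarrow> odd y"
    using circulant_edge_parity[OF odd_generators] by auto
  then show "vertex_sum (edges - {removed_edge}) edge_label x \<noteq>
      vertex_sum (edges - {removed_edge}) edge_label y"
    using vertex_sum_even[of x] vertex_sum_odd[of y] vertex_sum_even[of y] vertex_sum_odd[of x]
      shift_range
    by (cases "even x") auto
qed (rule bij_betw_edge_label_remove)

theorem card_vertex_sums_edge_label:
  "card (vertex_sum (edges - {removed_edge}) edge_label ` {0..<2 * n}) = 3"
proof -
  let ?F = "vertex_sum (edges - {removed_edge}) edge_label"
  obtain x1 where x1: "x1 < 2 * n" "odd x1" "int (odd_pos 0 x1) - int (odd_pos r x1) = - shift"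
    using odd_pos_diff_minus_shift by blast
  obtain x2 where x2: "x2 < 2 * n" "odd x2" "int (odd_pos 0 x2) - int (odd_pos r x2) = int n - shift"
    using odd_pos_diff_n_minus_shift by blast
  have F1: "int (?F x1) = int even_sum - shift" using vertex_sum_edge_label[OF x1(1)] x1 by simp
  have F2: "int (?F x2) = int even_sum + int n - shift" using vertex_sum_edge_label[OF x2(1)] x2 by simp
  have "?F ` {0..<2 * n} = {?F 0, ?F x1, ?F x2}"
  proof
    show "?F ` {0..<2 * n} \<subseteq> {?F 0, ?F x1, ?F x2}"
    proof
      fix b assume "b \<in> ?F ` {0..<2 * n}"
      then obtain x where x: "x < 2 * n" "b = ?F x" by auto
      then have "int b = int (?F 0) \<or> int b = int (?F x1) \<or> int b = int (?F x2)"
        using vertex_sum_even[of x] vertex_sum_even[of 0] vertex_sum_odd[of x] F1 F2 n_ge_2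
        by (cases "even x") auto
      then show "b \<in> {?F 0, ?F x1, ?F x2}" by auto
    qed
    show "{?F 0, ?F x1, ?F x2} \<subseteq> ?F ` {0..<2 * n}"
      using x1(1) x2(1) n_ge_2 by auto
  qed
  moreover have "?F 0 \<noteq> ?F x1" "?F 0 \<noteq> ?F x2" "?F x1 \<noteq> ?F x2"
    using F1 F2 vertex_sum_even[of 0] n_ge_2 shift_range by auto
  ultimately show ?thesis by simp
qed

lemma removed_edge_eq:
  assumes "x < 2 * n" "0 \<le> w" "w < 2 * int n" "[w - int x = step 0] (mod 2 * int n)"
  shows "removed_edge = {x, nat w}"
proof -
  have "N dvd (w - int x) - step 0" using assms(4) by (simp add: cong_iff_dvd_diff N_def)
  then have "(w - step 0) mod N = int x mod N" by (simp add: mod_eq_dvd_iff algebra_simps)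
  then have "even_end 0 0 = int x" using assms(1) by (simp add: even_end_def offset_0 N_def)
  moreover have "odd_end 0 0 True = w" using assms(2,3) by (simp add: odd_end_True offset_0 N_def)
  ultimately show ?thesis by (simp add: removed_edge_def edge_def)
qed

end

section \<open>Choosing the signs\<close>

lemma coprime_dvd_double_imp_eq_1:
  fixes g :: int and n :: nat
  assumes "int n dvd 2 * g" "0 < g" "g < int n" "coprime g (2 * int n)"
  shows "g = 1 \<and> n = 2"
proof -
  have "int n dvd 2 * g - int n" using assms(1) by (simp add: dvd_diff)
  then have "2 * g - int n = 0" by (rule dvd_abs_less_imp_eq_0) (use assms(2,3) in simp)
  then have "2 * int n = g * 4" by simp
  then have "g dvd 2 * int n" by simp
  then have "is_unit g" using assms(4) coprime_common_divisor dvd_refl by blast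
  then show ?thesis using \<open>2 * g - int n = 0\<close> assms(2) by simp
qed

lemma not_dvd_double_second:
  fixes G :: "int list" and n :: nat
  assumes "2 \<le> length G" "distinct G" "\<forall>s\<in>set G. 0 < s \<and> s < int n \<and> coprime s (2 * int n)"
  shows "\<not> int n dvd 2 * G ! 1"
proof
  assume "int n dvd 2 * G ! 1"
  moreover have "G ! 1 \<in> set G" "G ! 0 \<in> set G"
    using nth_mem[of 1 G] nth_mem[of 0 G] assms(1) by linarith+
  ultimately have "G ! 1 = 1" "n = 2" "0 < G ! 0" "G ! 0 < int n"
    using assms(3) coprime_dvd_double_imp_eq_1 by blast+
  then have "G ! 0 = G ! 1" by simp
  moreover have "G \<noteq> []" using assms(1) by auto
  ultimately show False using nth_eq_iff_index_eq[OF assms(2), of 0 1] assms(1) by simp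
qed

text \<open>Flipping the sign of the second generator changes the signed sum by twice that generator,
  which is not a multiple of \<open>n\<close>.\<close>

lemma obtain_signs_not_dvd:
  fixes G :: "int list" and n :: nat and \<sigma> :: int
  assumes "G \<noteq> []" "distinct G" "\<forall>s\<in>set G. 0 < s \<and> s < int n \<and> coprime s (2 * int n)"
    and "\<sigma> = 1 \<or> \<sigma> = -1"
  obtains \<epsilon> where "\<And>i. \<epsilon> i = 1 \<or> \<epsilon> i = -1" "\<epsilon> 0 = \<sigma>"
    "\<not> int n dvd (\<Sum>i<length G. \<epsilon> i * G ! i)"
proof (cases "length G = 1")
  case True
  have "0 < G ! 0" "G ! 0 < int n" using assms(1,3) nth_mem by blast+
  then have "\<not> int n dvd G ! 0" using zdvd_not_zless by blast
  then have "\<not> int n dvd \<sigma> * G ! 0" using assms(4) by auto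
  then show ?thesis using that[of "\<lambda>_. \<sigma>"] True assms(4) by auto
next
  case False
  moreover have "length G \<noteq> 0" using assms(1) by simp
  ultimately have r2: "2 \<le> length G" by linarith
  define \<epsilon>0 where "\<epsilon>0 i = (if i = 0 then \<sigma> else 1)" for i :: nat
  define \<epsilon>1 where "\<epsilon>1 = \<epsilon>0(1 := -1)"
  have "(\<Sum>i<length G. \<epsilon>0 i * G ! i) - (\<Sum>i<length G. \<epsilon>1 i * G ! i)
      = (\<Sum>i<length G. (\<epsilon>0 i - \<epsilon>1 i) * G ! i)"
    by (simp add: sum_subtractf[symmetric] algebra_simps)
  also have "\<dots> = (\<Sum>i<length G. if i = 1 then 2 * G ! 1 else 0)"
    by (intro sum.cong) (auto simp: \<epsilon>1_def \<epsilon>0_def)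
  also have "\<dots> = 2 * G ! 1" using r2 by simp
  finally have diff: "(\<Sum>i<length G. \<epsilon>0 i * G ! i) - (\<Sum>i<length G. \<epsilon>1 i * G ! i) = 2 * G ! 1" .
  have "\<not> int n dvd 2 * G ! 1" by (rule not_dvd_double_second[OF r2 assms(2,3)])
  then have "\<not> int n dvd (\<Sum>i<length G. \<epsilon>0 i * G ! i) \<or> \<not> int n dvd (\<Sum>i<length G. \<epsilon>1 i * G ! i)"
    using diff by (metis dvd_diff)
  then show ?thesis using that[of \<epsilon>0] that[of \<epsilon>1] assms(4) by (auto simp: \<epsilon>0_def \<epsilon>1_def)
qed

lemma obtain_local_antimagic_three_vertex_sums:
  assumes "distinct S" "\<forall>s\<in>set S. 0 < s \<and> s < int n \<and> coprime s (2 * int n)"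
    and "e \<in> circulant_edges (2 * n) S"
  obtains f where "local_antimagic (circulant_edges (2 * n) S - {e}) f"
    "card (vertex_sum (circulant_edges (2 * n) S - {e}) f ` {0..<2 * n}) = 3"
proof -
  have odd: "\<forall>s\<in>set S. odd s" using assms(2) coprime_double_imp_odd by blast
  obtain x y s \<sigma> where e: "e = {x, y}" "even x" "odd y" "x < 2 * n" "y < 2 * n"
    and s: "s \<in> set S" and \<sigma>: "\<sigma> = 1 \<or> \<sigma> = -1" "[int y - int x = \<sigma> * s] (mod 2 * int n)"
    by (rule circulant_edge_orient[OF odd assms(3)])
  \<comment> \<open>The generator of \<open>e\<close> goes first, so that \<open>e\<close> can receive the label \<open>0\<close>.\<close>
  define G where "G = s # remove1 s S"
  have G: "G \<noteq> []" "distinct G" "set G = set S" "G ! 0 = s"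
    using assms(1) s by (auto simp: G_def set_remove1_eq)
  have "\<forall>s\<in>set G. 0 < s \<and> s < int n \<and> coprime s (2 * int n)" using assms(2) G(3) by simp
  then obtain \<epsilon> where \<epsilon>: "\<And>i. \<epsilon> i = 1 \<or> \<epsilon> i = -1" "\<epsilon> 0 = \<sigma>"
    "\<not> int n dvd (\<Sum>i<length G. \<epsilon> i * G ! i)"
    using obtain_signs_not_dvd[OF G(1,2) _ \<sigma>(1)] by blast
  interpret L: circulant_labelling n G \<epsilon> "int y"
  proof
    show "\<And>s. s \<in> set G \<Longrightarrow> 0 < s \<and> s < int n \<and> odd s" using assms(2) odd G(3) by auto
  qed (use G \<epsilon> e(3) in auto)
  have "L.edges = circulant_edges (2 * n) S" by (rule circulant_edges_cong) (use G in simp)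
  moreover have "L.step 0 = \<sigma> * s" using \<epsilon>(2) G(4) by (simp add: L.step_def)
  then have "L.removed_edge = e" using L.removed_edge_eq[of x] e \<sigma>(2) by simp
  ultimately show ?thesis
    using that L.local_antimagic_edge_label L.card_vertex_sums_edge_label by simp
qed

lemma chi_la_eqI:
  assumes "local_antimagic E f" "card (vertex_sum E f ` V) = k"
    and "\<And>f. local_antimagic E f \<Longrightarrow> k \<le> card (vertex_sum E f ` V)"
  shows "chi_la V E = k"
  unfolding chi_la_def using assms by (intro cInf_eq_minimum) auto

lemma one_Cons_generators:
  fixes a :: "int list"
  assumes "2 \<le> n" "sorted_wrt (<) a" "\<forall>x\<in>set a. 1 < x \<and> x < int n \<and> coprime x (2 * int n)"
  shows "distinct (1 # a)" "\<forall>s\<in>set (1 # a). 0 < s \<and> s < int n \<and> coprime s (2 * int n)"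
proof -
  show "\<forall>s\<in>set (1 # a). 0 < s \<and> s < int n \<and> coprime s (2 * int n)"
  proof
    fix s assume "s \<in> set (1 # a)"
    then consider "s = 1" | "s \<in> set a" by auto
    then show "0 < s \<and> s < int n \<and> coprime s (2 * int n)"
    proof cases
      case 1
      then show ?thesis using assms(1) by simp
    next
      case 2
      then show ?thesis using assms(3) by fastforce
    qed
  qed
  have "distinct a" using assms(2) by (simp add: strict_sorted_iff)
  moreover have "1 \<notin> set a" using assms(3) by fastforce
  ultimately show "distinct (1 # a)" by simp
qed

theorem mainTheorem8:
  fixes n :: nat and a :: "int list" and e :: "nat set"
  assumes "n \<ge> 2"
    and "sorted_wrt (<) a"
    and "\<forall>x\<in>set a. 1 < x \<and> x < int n \<and> coprime x (2 * int n)"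
    and "e \<in> circulant_edges (2 * n) (1 # a)"
  shows "chi_la {0..<2 * n} (circulant_edges (2 * n) (1 # a) - {e}) = 3"
proof -
  note gens = one_Cons_generators[OF assms(1-3)]
  obtain f where "local_antimagic (circulant_edges (2 * n) (1 # a) - {e}) f"
    "card (vertex_sum (circulant_edges (2 * n) (1 # a) - {e}) f ` {0..<2 * n}) = 3"
    by (rule obtain_local_antimagic_three_vertex_sums[OF gens assms(4)])
  moreover have "\<forall>s\<in>set (1 # a). odd s" using gens(2) coprime_double_imp_odd by blast
  ultimately show ?thesis
    using three_le_card_vertex_sums_circulant_minus_edge[OF assms(1)] by (intro chi_la_eqI) auto
qed

end
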